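(* For every integer $n\geq1$ the function $$p_n(t)=\frac{1}{t^2}\sum_{k=1}^\infty(2\pi k)^{1-2n}\left(\frac{4\pi k}{t^2+(2\pi k)^2}+\frac{8\pi kt}{(t^2+(2\pi k)^2)^2}+\frac{2n-1}{2\pi k}\,\frac{2t}{t^2+(2\pi k)^2}\right),\qquad t>0,$$ is completely monotonic on $(0,\infty)$.
   Context: A function $g$ on $(0,\infty)$ is completely monotonic if it is $C^\infty$ and $(-1)^mg^{(m)}(t)\geq0$ for all $m\geq0$ and $t>0$. *)

theory Defs
  imports "HOL-Analysis.Analysis"
begin

definition completely_monotonic :: "(real \<Rightarrow> real) \<Rightarrow> bool" where
  "completely_monotonic g \<longleftrightarrow>
     (\<forall>m. \<forall>t>0. (deriv ^^ m) g differentiable (at t)) \<and>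
     (\<forall>m. \<forall>t>0. (-1) ^ m * (deriv ^^ m) g t \<ge> 0)"

definition p_fun :: "nat \<Rightarrow> real \<Rightarrow> real" where
  "p_fun n t = (1 / t\<^sup>2) * (\<Sum>j. let k = real (Suc j) in
      (2*pi*k) powi (1 - 2 * int n) *
      (4*pi*k / (t\<^sup>2 + (2*pi*k)\<^sup>2)
       + 8*pi*k*t / (t\<^sup>2 + (2*pi*k)\<^sup>2)\<^sup>2
       + (2 * real n - 1) / (2*pi*k) * (2*t / (t\<^sup>2 + (2*pi*k)\<^sup>2))))"

end

theory Submission
  imports Defs "HOL-Real_Asymp.Real_Asymp"
begin

text \<open>With \<open>a = 2 \<pi> k\<close>, the \<open>k\<close>-th summand of \<open>p_fun n t\<close> (including the factor \<open>1 / t\<^sup>2\<close>) is the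
  Laplace transform of
    \<open>2 / a\<^bsup>2n+2\<^esup> * (a * (y - sin y) - y * sin y + (2 n + 1) * (1 - cos y))\<close>,  \<open>y = a x\<close>,
  as an explicit antiderivative of \<open>exp (- t x)\<close> times this function shows. An elementary
  trigonometric inequality makes the bracket nonnegative for \<open>a \<ge> 2\<close> and \<open>2 n + 1 \<ge> 3\<close>, so
  \<open>(-1)\<^sup>m\<close> times the \<open>m\<close>-th derivative of \<open>p_fun n\<close> is a sum of Laplace transforms of nonnegative
  functions \<open>x\<^sup>m * \<dots>\<close>. Differentiation under the integral and termwise in \<open>k\<close> is justified by
  the bound \<open>8 (n + 1) (1 + x) / a\<^sup>2\<close> on the densities, which is summable in \<open>k\<close>.\<close>

section \<open>A criterion for complete monotonicity\<close>

lemma completely_monotonicI: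
  fixes F :: "nat \<Rightarrow> real \<Rightarrow> real"
  assumes F0: "\<And>t. t > 0 \<Longrightarrow> F 0 t = f t"
    and F': "\<And>m t. t > 0 \<Longrightarrow> (F m has_real_derivative - F (Suc m) t) (at t)"
    and F_nonneg: "\<And>m t. t > 0 \<Longrightarrow> F m t \<ge> 0"
  shows "completely_monotonic f"
proof -
  have deriv: "((deriv ^^ m) f has_real_derivative (-1) ^ Suc m * F (Suc m) t) (at t)"
    if eq: "\<And>t. t > 0 \<Longrightarrow> (deriv ^^ m) f t = (-1) ^ m * F m t" and "t > 0" for m t
  proof (rule has_field_derivative_transform_within_open[where S = "{0<..}"])
    show "((\<lambda>t. (-1) ^ m * F m t) has_real_derivative (-1) ^ Suc m * F (Suc m) t) (at t)"
      using DERIV_cmult[OF F'[OF \<open>t > 0\<close>], of "(-1) ^ m"] by simp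
  qed (use eq \<open>t > 0\<close> in auto)
  have eq: "(deriv ^^ m) f t = (-1) ^ m * F m t" if "t > 0" for m t
    using that
  proof (induction m arbitrary: t)
    case 0
    then show ?case
      using F0 by simp
  next
    case (Suc m)
    then show ?case
      using DERIV_imp_deriv[OF deriv[OF Suc.IH]] by simp
  qed
  show ?thesis
    unfolding completely_monotonic_def
  proof (intro conjI allI impI)
    fix m :: nat and t :: real assume "t > 0"
    show "(deriv ^^ m) f differentiable (at t)"
      using deriv[OF eq \<open>t > 0\<close>] unfolding real_differentiable_def by blast
    show "(-1) ^ m * (deriv ^^ m) f t \<ge> 0"
      using F_nonneg[OF \<open>t > 0\<close>, of m] by (simp add: eq[OF \<open>t > 0\<close>] flip: power_mult_distrib)
  qed
qed

section \<open>Laplace transforms\<close>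

text \<open>The Laplace transform \<open>\<integral>\<^sub>0\<^sup>\<infinity> exp (- t * x) * g x dx\<close> is taken as the series of its pieces over
  the unit intervals \<open>[j, j + 1]\<close>, which avoids improper integrals.\<close>

definition laplace_piece :: "(real \<Rightarrow> real) \<Rightarrow> real \<Rightarrow> nat \<Rightarrow> real" where
  "laplace_piece g t j = integral {real j..real j + 1} (\<lambda>x. exp (- t * x) * g x)"

definition laplace :: "(real \<Rightarrow> real) \<Rightarrow> real \<Rightarrow> real" where
  "laplace g t = (\<Sum>j. laplace_piece g t j)"

definition subexponential :: "(real \<Rightarrow> real) \<Rightarrow> bool" where
  "subexponential g \<longleftrightarrow> (\<forall>s>0. \<exists>B. \<forall>x\<ge>0. \<bar>g x\<bar> \<le> B * exp (s * x))"

lemma laplace_piece_sums_antiderivative: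
  assumes F': "\<And>x. x \<ge> 0 \<Longrightarrow> (F has_real_derivative exp (- t * x) * g x) (at x)"
    and F_lim: "(\<lambda>j. F (real j)) \<longlonglongrightarrow> 0"
  shows "laplace_piece g t sums (- F 0)"
proof -
  have "laplace_piece g t = (\<lambda>j. F (real (Suc j)) - F (real j))"
  proof
    fix j
    have "((\<lambda>x. exp (- t * x) * g x) has_integral F (real j + 1) - F (real j)) {real j..real j + 1}"
    proof (rule fundamental_theorem_of_calculus)
      fix x assume "x \<in> {real j..real j + 1}"
      then show "(F has_vector_derivative exp (- t * x) * g x) (at x within {real j..real j + 1})"
        unfolding has_real_derivative_iff_has_vector_derivative[symmetric]
        using F' by (auto intro: has_field_derivative_at_within)
    qed simp
    then show "laplace_piece g t j = F (real (Suc j)) - F (real j)"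
      unfolding laplace_piece_def by (simp add: integral_unique add.commute)
  qed
  then show ?thesis
    using telescope_sums[OF F_lim] by simp
qed

lemma laplace_piece_cmult: "laplace_piece (\<lambda>x. c * g x) t j = c * laplace_piece g t j"
  unfolding laplace_piece_def by (simp add: mult.left_commute)

lemma laplace_piece_nonneg:
  assumes "continuous_on {0..} g" and "\<And>x. x \<ge> 0 \<Longrightarrow> g x \<ge> 0"
  shows "laplace_piece g t j \<ge> 0"
  unfolding laplace_piece_def
proof (rule integral_nonneg)
  show "(\<lambda>x. exp (- t * x) * g x) integrable_on {real j..real j + 1}"
    by (auto intro!: integrable_continuous_interval continuous_intros continuous_on_subset[OF assms(1)])
qed (use assms(2) in auto)

lemma laplace_piece_bound:
  assumes g: "continuous_on {0..} g" and g_le: "\<And>x. x \<ge> 0 \<Longrightarrow> \<bar>g x\<bar> \<le> B * exp (s * x)"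
    and "s \<le> t0" "t0 \<le> t"
  shows "\<bar>laplace_piece g t j\<bar> \<le> B * exp (- (t0 - s)) ^ j"
proof -
  have B: "B \<ge> 0"
    using g_le[of 0] by simp
  have "\<bar>exp (- t * x) * g x\<bar> \<le> B * exp (- (t0 - s)) ^ j" if x: "x \<in> {real j..real j + 1}" for x
  proof -
    have "\<bar>exp (- t * x) * g x\<bar> \<le> exp (- t * x) * (B * exp (s * x))"
      using g_le x by (simp add: abs_mult)
    also have "\<dots> = B * exp (- (t - s) * x)"
      by (simp add: algebra_simps flip: exp_add)
    also have "\<dots> \<le> B * exp (- (t0 - s) * real j)"
    proof -
      have "(t0 - s) * real j \<le> (t - s) * x"
        using x assms(3,4) by (intro mult_mono) auto
      then show ?thesis
        using B by (intro mult_left_mono) (simp_all add: algebra_simps)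
    qed
    also have "\<dots> = B * exp (- (t0 - s)) ^ j"
      by (simp add: mult.commute flip: exp_of_nat_mult)
    finally show ?thesis .
  qed
  then have "norm (laplace_piece g t j) \<le> B * exp (- (t0 - s)) ^ j * (real j + 1 - real j)"
    unfolding laplace_piece_def
    by (intro integral_bound continuous_intros continuous_on_subset[OF g]) auto
  then show ?thesis
    by simp
qed

lemma laplace_piece_has_derivative:
  assumes g: "continuous_on {0..} g"
  shows "((\<lambda>t. laplace_piece g t j) has_real_derivative - laplace_piece (\<lambda>x. x * g x) t j) (at t)"
proof -
  let ?I = "cbox (real j) (real j + 1)"
  have g_I: "continuous_on ?I g"
    by (rule continuous_on_subset[OF g]) auto
  have "((\<lambda>t. integral ?I (\<lambda>x. exp (- t * x) * g x)) has_field_derivative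
      integral ?I (\<lambda>x. - x * exp (- t * x) * g x)) (at t within UNIV)"
  proof (rule leibniz_rule_field_derivative[where fx = "\<lambda>t x. - x * exp (- t * x) * g x"])
    show "((\<lambda>t. exp (- t * x) * g x) has_field_derivative - x * exp (- t * x) * g x) (at t within UNIV)"
      for t x by (auto intro!: derivative_eq_intros)
    show "(\<lambda>x. exp (- t * x) * g x) integrable_on ?I" for t
      by (intro integrable_continuous continuous_intros g_I)
    have "continuous_on (UNIV \<times> ?I) (\<lambda>z. - snd z * exp (- fst z * snd z) * g (snd z))"
      by (intro continuous_intros continuous_on_compose2[OF g_I continuous_on_snd]) auto
    then show "continuous_on (UNIV \<times> ?I) (\<lambda>(t, x). - x * exp (- t * x) * g x)"
      by (simp add: case_prod_beta)
  qed auto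
  moreover have "integral ?I (\<lambda>x. - x * exp (- t * x) * g x) = - laplace_piece (\<lambda>x. x * g x) t j"
    unfolding laplace_piece_def cbox_interval by (simp add: integral_neg mult_ac)
  ultimately show ?thesis
    unfolding laplace_piece_def cbox_interval by simp
qed

lemma summable_laplace_piece:
  assumes "continuous_on {0..} g" and "\<And>x. x \<ge> 0 \<Longrightarrow> \<bar>g x\<bar> \<le> B * exp (s * x)" and "s < t"
  shows "summable (laplace_piece g t)"
proof (rule summable_comparison_test)
  show "summable (\<lambda>j. B * exp (- (t - s)) ^ j)"
    using \<open>s < t\<close> by (intro summable_mult summable_geometric) simp
  show "\<exists>N. \<forall>j\<ge>N. norm (laplace_piece g t j) \<le> B * exp (- (t - s)) ^ j"
    using laplace_piece_bound[OF assms(1,2)] \<open>s < t\<close> by auto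
qed

lemma laplace_bound:
  assumes g: "continuous_on {0..} g" and g_le: "\<And>x. x \<ge> 0 \<Longrightarrow> \<bar>g x\<bar> \<le> B * exp (s * x)"
    and "s < t0" "t0 \<le> t"
  shows "\<bar>laplace g t\<bar> \<le> B / (1 - exp (- (t0 - s)))"
proof -
  have geometric: "(\<lambda>j. B * exp (- (t0 - s)) ^ j) sums (B / (1 - exp (- (t0 - s))))"
    using \<open>s < t0\<close> sums_mult[OF geometric_sums, of "exp (- (t0 - s))" B] by simp
  have "summable (\<lambda>j. \<bar>laplace_piece g t j\<bar>)"
    by (rule summable_rabs_comparison_test[OF _ sums_summable[OF geometric]])
      (use laplace_piece_bound[OF g g_le] assms(3,4) in auto)
  then have "\<bar>laplace g t\<bar> \<le> (\<Sum>j. \<bar>laplace_piece g t j\<bar>)"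
    unfolding laplace_def by (rule summable_rabs)
  also have "\<dots> \<le> B / (1 - exp (- (t0 - s)))"
    by (rule sums_le[OF _ summable_sums geometric])
      (use laplace_piece_bound[OF g g_le] assms(3,4) \<open>summable _\<close> in auto)
  finally show ?thesis .
qed

lemma laplace_nonneg:
  assumes "continuous_on {0..} g" and "subexponential g" and "t > 0"
    and "\<And>x. x \<ge> 0 \<Longrightarrow> g x \<ge> 0"
  shows "laplace g t \<ge> 0"
proof -
  obtain B where B: "\<And>x. x \<ge> 0 \<Longrightarrow> \<bar>g x\<bar> \<le> B * exp (t / 2 * x)"
    using \<open>subexponential g\<close> \<open>t > 0\<close> unfolding subexponential_def by (meson half_gt_zero)
  have "summable (laplace_piece g t)"
    using \<open>t > 0\<close> by (intro summable_laplace_piece[OF assms(1), of B "t / 2"] B) auto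
  then show ?thesis
    unfolding laplace_def using laplace_piece_nonneg[OF assms(1,4)] by (rule suminf_nonneg)
qed

lemma subexponential_mult_id:
  assumes "subexponential g"
  shows "subexponential (\<lambda>x. x * g x)"
  unfolding subexponential_def
proof (intro allI impI)
  fix s :: real assume "s > 0"
  then obtain B where B: "\<And>x. x \<ge> 0 \<Longrightarrow> \<bar>g x\<bar> \<le> B * exp (s / 2 * x)"
    using assms unfolding subexponential_def by (meson half_gt_zero)
  have "\<bar>x * g x\<bar> \<le> 2 * B / s * exp (s * x)" if "x \<ge> 0" for x
  proof -
    have x_le: "s / 2 * x \<le> exp (s / 2 * x)"
      using exp_ge_add_one_self[of "s / 2 * x"] by linarith
    have "\<bar>x * g x\<bar> \<le> x * (B * exp (s / 2 * x))"
      using B[OF that] that by (simp add: abs_mult mult_left_mono)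
    also have "\<dots> \<le> 2 / s * exp (s / 2 * x) * (B * exp (s / 2 * x))"
      using x_le \<open>s > 0\<close> B[OF that]
      by (intro mult_right_mono) (auto simp: field_simps intro: order_trans[OF abs_ge_zero])
    also have "\<dots> = 2 * B / s * exp (s * x)"
      by (simp add: field_simps flip: exp_add)
    finally show ?thesis .
  qed
  then show "\<exists>B. \<forall>x\<ge>0. \<bar>x * g x\<bar> \<le> B * exp (s * x)"
    by blast
qed

lemma has_real_derivative_suminf:
  fixes f f' :: "nat \<Rightarrow> real \<Rightarrow> real"
  assumes f': "\<And>i x. x \<ge> t0 \<Longrightarrow> (f i has_real_derivative f' i x) (at x)"
    and M: "summable M" "\<And>i x. x \<ge> t0 \<Longrightarrow> \<bar>f' i x\<bar> \<le> M i"
    and "summable (\<lambda>i. f i t)" "t > t0"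
  shows "((\<lambda>x. \<Sum>i. f i x) has_real_derivative (\<Sum>i. f' i t)) (at t)"
proof (rule has_field_derivative_series'(2)[of "{t0..}"])
  show "uniformly_convergent_on {t0..} (\<lambda>n x. \<Sum>i<n. f' i x)"
    using M by (intro Weierstrass_m_test'[OF _ M(1)]) auto
qed (use assms in \<open>auto intro: has_field_derivative_at_within simp: convex_real_interval\<close>)

lemma laplace_has_derivative:
  assumes g: "continuous_on {0..} g" and "subexponential g" and "t > 0"
  shows "(laplace g has_real_derivative - laplace (\<lambda>x. x * g x) t) (at t)"
proof -
  have t: "t / 4 > 0" "t / 4 < t / 2" "t / 2 < t"
    using \<open>t > 0\<close> by simp_all
  obtain B where B: "\<And>x. x \<ge> 0 \<Longrightarrow> \<bar>g x\<bar> \<le> B * exp (t / 2 * x)"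
    using \<open>subexponential g\<close> t unfolding subexponential_def by (meson order.strict_trans)
  obtain B' where B': "\<And>x. x \<ge> 0 \<Longrightarrow> \<bar>x * g x\<bar> \<le> B' * exp (t / 4 * x)"
    using subexponential_mult_id[OF \<open>subexponential g\<close>] t unfolding subexponential_def by blast
  have xg: "continuous_on {0..} (\<lambda>x. x * g x)"
    by (intro continuous_intros g)
  have "((\<lambda>t. \<Sum>j. laplace_piece g t j) has_real_derivative
      (\<Sum>j. - laplace_piece (\<lambda>x. x * g x) t j)) (at t)"
  proof (rule has_real_derivative_suminf[of "t / 2"])
    show "summable (\<lambda>j. B' * exp (- (t / 2 - t / 4)) ^ j)"
      using \<open>t > 0\<close> by (intro summable_mult summable_geometric) simp
    show "\<bar>- laplace_piece (\<lambda>x. x * g x) x j\<bar> \<le> B' * exp (- (t / 2 - t / 4)) ^ j"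
      if "t / 2 \<le> x" for j x
      using laplace_piece_bound[OF xg B', of "t / 2" x j] that \<open>t > 0\<close> by simp
    show "summable (\<lambda>j. laplace_piece g t j)"
      using summable_laplace_piece[OF g B] \<open>t > 0\<close> by simp
  qed (use \<open>t > 0\<close> laplace_piece_has_derivative[OF g] in auto)
  moreover have "(\<Sum>j. - laplace_piece (\<lambda>x. x * g x) t j) = - laplace (\<lambda>x. x * g x) t"
    unfolding laplace_def
  proof (rule suminf_minus)
    show "summable (laplace_piece (\<lambda>x. x * g x) t)"
      using xg B' t by (intro summable_laplace_piece[of _ B' "t / 4"]) auto
  qed
  ultimately show ?thesis
    unfolding laplace_def by simp
qed

lemma pow_le_fact_exp:
  fixes x s :: real
  assumes "x \<ge> 0" "s > 0"
  shows "x ^ k \<le> fact k / s ^ k * exp (s * x)"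
proof -
  have "(\<Sum>i\<in>{k}. (s * x) ^ i /\<^sub>R fact i) \<le> (\<Sum>i. (s * x) ^ i /\<^sub>R fact i)"
    using assms by (intro sum_le_suminf summable_exp_generic) auto
  then have "(s * x) ^ k / fact k \<le> exp (s * x)"
    by (simp add: exp_def divide_inverse mult.commute)
  then show ?thesis
    using assms by (simp add: power_mult_distrib field_simps)
qed

lemma linear_growth_pow_mult_le_exp:
  fixes g :: "real \<Rightarrow> real"
  assumes g_le: "\<And>x. x \<ge> 0 \<Longrightarrow> \<bar>g x\<bar> \<le> B * (1 + x)" and "s > 0" "x \<ge> 0"
  shows "\<bar>x ^ m * g x\<bar> \<le> B * (fact m / s ^ m + fact (Suc m) / s ^ Suc m) * exp (s * x)"
proof -
  have "\<bar>g 0\<bar> \<le> B"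
    using g_le[of 0] by simp
  then have B: "B \<ge> 0"
    using abs_ge_zero[of "g 0"] by linarith
  have "\<bar>x ^ m * g x\<bar> = x ^ m * \<bar>g x\<bar>"
    using \<open>x \<ge> 0\<close> by (simp add: abs_mult)
  also have "\<dots> \<le> x ^ m * (B * (1 + x))"
    using \<open>x \<ge> 0\<close> by (intro mult_left_mono g_le) simp_all
  also have "\<dots> = B * (x ^ m + x ^ Suc m)"
    by (simp add: algebra_simps)
  also have "\<dots> \<le> B * ((fact m / s ^ m + fact (Suc m) / s ^ Suc m) * exp (s * x))"
    using pow_le_fact_exp[OF \<open>x \<ge> 0\<close> \<open>s > 0\<close>, of m] pow_le_fact_exp[OF \<open>x \<ge> 0\<close> \<open>s > 0\<close>, of "Suc m"] B
    by (intro mult_left_mono) (auto simp: algebra_simps)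
  finally show ?thesis
    by (simp add: mult.assoc)
qed

lemma subexponential_pow_mult:
  fixes g :: "real \<Rightarrow> real"
  assumes "\<And>x. x \<ge> 0 \<Longrightarrow> \<bar>g x\<bar> \<le> B * (1 + x)"
  shows "subexponential (\<lambda>x. x ^ m * g x)"
  unfolding subexponential_def using linear_growth_pow_mult_le_exp[OF assms] by blast

lemma laplace_pow_mult_bound:
  assumes "t0 > 0"
  obtains C where "\<And>g B t. continuous_on {0..} (g :: real \<Rightarrow> real) \<Longrightarrow> (\<And>x. x \<ge> 0 \<Longrightarrow> \<bar>g x\<bar> \<le> B * (1 + x)) \<Longrightarrow>
    t0 \<le> t \<Longrightarrow> \<bar>laplace (\<lambda>x. x ^ m * g x) t\<bar> \<le> B * C"
proof
  define W where "W = fact m / (t0 / 2) ^ m + fact (Suc m) / (t0 / 2) ^ Suc m"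
  fix g :: "real \<Rightarrow> real" and B t :: real
  assume g: "continuous_on {0..} g" and g_le: "\<And>x. x \<ge> 0 \<Longrightarrow> \<bar>g x\<bar> \<le> B * (1 + x)" and "t0 \<le> t"
  have "\<bar>laplace (\<lambda>x. x ^ m * g x) t\<bar> \<le> B * W / (1 - exp (- (t0 - t0 / 2)))"
    using \<open>t0 > 0\<close> \<open>t0 \<le> t\<close> linear_growth_pow_mult_le_exp[OF g_le, of "t0 / 2"]
    by (intro laplace_bound[where s = "t0 / 2"] continuous_intros g) (auto simp: W_def)
  then show "\<bar>laplace (\<lambda>x. x ^ m * g x) t\<bar> \<le> B * (W / (1 - exp (- (t0 / 2))))"
    by simp
qed

section \<open>Trigonometric quasi-polynomials\<close>

definition trig_quasipoly :: "real \<Rightarrow> real \<Rightarrow> real \<Rightarrow> real \<Rightarrow> real \<Rightarrow> real \<Rightarrow> real \<Rightarrow> real \<Rightarrow> real" where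
  "trig_quasipoly a c0 c1 s0 s1 k0 k1 x =
     c0 + c1 * x + (s0 + s1 * x) * sin (a * x) + (k0 + k1 * x) * cos (a * x)"

lemma has_real_derivative_exp_trig_quasipoly:
  "((\<lambda>x. exp (- t * x) * trig_quasipoly a c0 c1 s0 s1 k0 k1 x) has_real_derivative
     exp (- t * x) * trig_quasipoly a (c1 - t * c0) (- t * c1) (s1 - t * s0 - a * k0) (- t * s1 - a * k1)
       (k1 - t * k0 + a * s0) (a * s1 - t * k1) x) (at x)"
  unfolding trig_quasipoly_def
  by (rule derivative_eq_intros refl | simp)+ (simp add: algebra_simps)

lemma trig_quasipoly_bound:
  assumes "x \<ge> 0"
  shows "\<bar>trig_quasipoly a c0 c1 s0 s1 k0 k1 x\<bar> \<le> (\<bar>c0\<bar> + \<bar>c1\<bar> + \<bar>s0\<bar> + \<bar>s1\<bar> + \<bar>k0\<bar> + \<bar>k1\<bar>) * (1 + x)"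
proof -
  have "\<bar>(u + v * x) * w\<bar> \<le> (\<bar>u\<bar> + \<bar>v\<bar>) * (1 + x)" if "\<bar>w\<bar> \<le> 1" for u v w
  proof -
    have "\<bar>(u + v * x) * w\<bar> \<le> \<bar>u + v * x\<bar>"
      using that by (simp add: abs_mult mult_left_le)
    also have "\<dots> \<le> \<bar>u\<bar> + \<bar>v\<bar> * x"
      using assms by (simp add: abs_mult order_trans[OF abs_triangle_ineq])
    also have "\<dots> \<le> (\<bar>u\<bar> + \<bar>v\<bar>) * (1 + x)"
      using assms by (simp add: algebra_simps)
    finally show ?thesis .
  qed
  from this[of 1 c0 c1] this[of "sin (a * x)" s0 s1] this[of "cos (a * x)" k0 k1] show ?thesis
    unfolding trig_quasipoly_def
    using abs_triangle_ineq[of "c0 + c1 * x" "(s0 + s1 * x) * sin (a * x)"]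
      abs_triangle_ineq[of "c0 + c1 * x + (s0 + s1 * x) * sin (a * x)" "(k0 + k1 * x) * cos (a * x)"]
    by (simp add: ring_distribs)
qed

lemma exp_trig_quasipoly_LIMSEQ_zero:
  assumes "t > 0"
  shows "(\<lambda>j. exp (- t * real j) * trig_quasipoly a c0 c1 s0 s1 k0 k1 (real j)) \<longlonglongrightarrow> 0"
proof (rule Lim_null_comparison)
  define K where "K = \<bar>c0\<bar> + \<bar>c1\<bar> + \<bar>s0\<bar> + \<bar>s1\<bar> + \<bar>k0\<bar> + \<bar>k1\<bar>"
  show "\<forall>\<^sub>F j in sequentially.
      norm (exp (- t * real j) * trig_quasipoly a c0 c1 s0 s1 k0 k1 (real j))
        \<le> K * (exp (- t * real j) * (1 + real j))"
    using trig_quasipoly_bound[of "real j" a c0 c1 s0 s1 k0 k1 for j]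
    by (auto simp: K_def abs_mult mult_ac intro!: mult_left_mono)
  have "(\<lambda>j. exp (- t * real j) * (1 + real j)) \<longlonglongrightarrow> 0"
    using \<open>t > 0\<close> by real_asymp
  then show "(\<lambda>j. K * (exp (- t * real j) * (1 + real j))) \<longlonglongrightarrow> 0"
    by (rule tendsto_mult_right_zero)
qed

lemma laplace_trig_quasipoly:
  assumes "t > 0"
  shows "laplace_piece (trig_quasipoly a c0 c1 s0 s1 k0 k1) t sums
    (c0 / t + c1 / t\<^sup>2 + (a * s0 + t * k0) / (t\<^sup>2 + a\<^sup>2)
      + (2 * a * t * s1 + (t\<^sup>2 - a\<^sup>2) * k1) / (t\<^sup>2 + a\<^sup>2)\<^sup>2)"
proof -
  define D where "D = t\<^sup>2 + a\<^sup>2"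
  have "D > 0"
    unfolding D_def using \<open>t > 0\<close> by (simp add: add_pos_nonneg)
  \<comment> \<open>Coefficients of the antiderivative: they invert the coefficient map of
    \<open>has_real_derivative_exp_trig_quasipoly\<close>.\<close>
  define p_c1 where "p_c1 = - c1 / t"
  define p_c0 where "p_c0 = (p_c1 - c0) / t"
  define p_s1 where "p_s1 = (a * k1 - t * s1) / D"
  define p_k1 where "p_k1 = (- a * s1 - t * k1) / D"
  define p_s0 where "p_s0 = (a * (k0 - p_k1) - t * (s0 - p_s1)) / D"
  define p_k0 where "p_k0 = (- a * (s0 - p_s1) - t * (k0 - p_k1)) / D"
  define F where "F x = exp (- t * x) * trig_quasipoly a p_c0 p_c1 p_s0 p_s1 p_k0 p_k1 x" for x
  have "p_c1 - t * p_c0 = c0" "- t * p_c1 = c1"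
    unfolding p_c0_def p_c1_def using \<open>t > 0\<close> by (auto simp: field_simps)
  moreover have "- t * p_s1 - a * p_k1 = s1" "a * p_s1 - t * p_k1 = k1"
    "p_s1 - t * p_s0 - a * p_k0 = s0" "p_k1 - t * p_k0 + a * p_s0 = k0"
    unfolding p_s0_def p_k0_def p_s1_def p_k1_def using \<open>D > 0\<close>
    by (simp_all add: field_simps, simp_all add: D_def power2_eq_square algebra_simps)
  ultimately have F': "(F has_real_derivative exp (- t * x) * trig_quasipoly a c0 c1 s0 s1 k0 k1 x) (at x)" for x
    using has_real_derivative_exp_trig_quasipoly[of t a p_c0 p_c1 p_s0 p_s1 p_k0 p_k1 x]
    unfolding F_def by simp
  have F_lim: "(\<lambda>j. F (real j)) \<longlonglongrightarrow> 0"
    unfolding F_def using \<open>t > 0\<close> by (rule exp_trig_quasipoly_LIMSEQ_zero)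
  have ps1_pk1: "a * p_s1 + t * p_k1 = - (2 * a * t * s1 + (t\<^sup>2 - a\<^sup>2) * k1) / D"
    unfolding p_s1_def p_k1_def using \<open>D > 0\<close> by (simp add: field_simps power2_eq_square)
  have "- F 0 = c0 / t + c1 / t\<^sup>2 + (a * (s0 - p_s1) + t * (k0 - p_k1)) / D"
    unfolding F_def trig_quasipoly_def p_c0_def p_c1_def p_k0_def using \<open>t > 0\<close> \<open>D > 0\<close>
    by (simp add: field_simps power2_eq_square)
  also have "\<dots> = c0 / t + c1 / t\<^sup>2 + (a * s0 + t * k0) / D - (a * p_s1 + t * p_k1) / D"
    by (simp add: diff_divide_distrib algebra_simps)
  also have "\<dots> = c0 / t + c1 / t\<^sup>2 + (a * s0 + t * k0) / D
      + (2 * a * t * s1 + (t\<^sup>2 - a\<^sup>2) * k1) / D\<^sup>2"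
    unfolding ps1_pk1 by (simp add: power2_eq_square minus_divide_left)
  finally show ?thesis
    using laplace_piece_sums_antiderivative[OF F' F_lim] by (simp add: D_def)
qed

section \<open>An elementary trigonometric inequality\<close>

lemma x_cos_le_two_sin:
  fixes y :: real
  assumes "0 \<le> y" "y \<le> pi"
  shows "y * cos y \<le> 2 * sin y"
proof (cases "y \<le> pi / 2")
  case True
  have "2 * sin 0 - 0 * cos 0 \<le> 2 * sin y - y * cos y"
  proof (rule DERIV_nonneg_imp_nondecreasing[OF assms(1)])
    fix x assume x: "0 \<le> x" "x \<le> y"
    have "DERIV (\<lambda>y. 2 * sin y - y * cos y) x :> cos x + x * sin x"
      by (rule derivative_eq_intros refl | simp)+
    moreover have "cos x + x * sin x \<ge> 0"
      using x True assms by (intro add_nonneg_nonneg cos_ge_zero mult_nonneg_nonneg sin_ge_zero) auto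
    ultimately show "\<exists>d. DERIV (\<lambda>y. 2 * sin y - y * cos y) x :> d \<and> d \<ge> 0"
      by blast
  qed
  then show ?thesis
    by simp
next
  case False
  then have "cos y \<le> 0"
    using cos_monotone_0_pi_le[of "pi / 2" y] assms by simp
  moreover have "sin y \<ge> 0"
    using assms by (intro sin_ge_zero) auto
  ultimately show ?thesis
    using mult_nonneg_nonpos[OF assms(1) \<open>cos y \<le> 0\<close>] by linarith
qed

lemma x_sin_le_three_one_minus_cos:
  fixes y :: real
  assumes "0 \<le> y" "y \<le> pi"
  shows "y * sin y \<le> 3 * (1 - cos y)"
proof -
  have "3 - 3 * cos 0 - 0 * sin 0 \<le> 3 - 3 * cos y - y * sin y"
  proof (rule DERIV_nonneg_imp_nondecreasing[OF assms(1)])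
    fix x assume x: "0 \<le> x" "x \<le> y"
    have "DERIV (\<lambda>y. 3 - 3 * cos y - y * sin y) x :> 2 * sin x - x * cos x"
      by (rule derivative_eq_intros refl | simp)+
    moreover have "x * cos x \<le> 2 * sin x"
      using x assms by (intro x_cos_le_two_sin) auto
    ultimately show "\<exists>d. DERIV (\<lambda>y. 3 - 3 * cos y - y * sin y) x :> d \<and> d \<ge> 0"
      by force
  qed
  then show ?thesis
    by simp
qed

lemma sin_cos_kernel_nonneg:
  fixes y a N :: real
  assumes "y \<ge> 0" "a \<ge> 2" "N \<ge> 3"
  shows "0 \<le> a * (y - sin y) - y * sin y + N * (1 - cos y)"
proof (cases "y \<le> pi")
  case True
  have "y * sin y \<le> 3 * (1 - cos y)"
    using x_sin_le_three_one_minus_cos[OF \<open>y \<ge> 0\<close> True] .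
  also have "\<dots> \<le> N * (1 - cos y)"
    using \<open>N \<ge> 3\<close> by (rule mult_right_mono) simp
  finally have "y * sin y \<le> N * (1 - cos y)" .
  moreover have "a * (y - sin y) \<ge> 0"
    using sin_x_le_x[OF \<open>y \<ge> 0\<close>] \<open>a \<ge> 2\<close> by simp
  ultimately show ?thesis
    by linarith
next
  case False
  have "y * sin y \<le> y"
    using \<open>y \<ge> 0\<close> by (simp add: mult_left_le)
  moreover have "2 * (y - 1) \<le> a * (y - sin y)"
    using False pi_gt3 \<open>a \<ge> 2\<close> by (intro mult_mono) auto
  then have "2 * y - 2 \<le> a * (y - sin y)"
    by simp
  moreover have "N * (1 - cos y) \<ge> 0"
    using \<open>N \<ge> 3\<close> by simp
  ultimately show ?thesis
    using False pi_gt3 by linarith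
qed

lemma sin_cos_kernel_bound:
  fixes y a N :: real
  assumes "y \<ge> 0" "a \<ge> 0" "N \<ge> 0"
  shows "\<bar>a * (y - sin y) - y * sin y + N * (1 - cos y)\<bar> \<le> a * (y + 1) + y + 2 * N"
proof -
  have "\<bar>y - sin y\<bar> \<le> y + 1"
    using abs_triangle_ineq4[of y "sin y"] abs_sin_le_one[of y] \<open>y \<ge> 0\<close> by linarith
  then have "\<bar>a * (y - sin y)\<bar> \<le> a * (y + 1)"
    using \<open>a \<ge> 0\<close> by (simp add: abs_mult mult_left_mono)
  moreover have "\<bar>y * sin y\<bar> \<le> y"
    using \<open>y \<ge> 0\<close> abs_sin_le_one[of y] by (simp add: abs_mult mult_left_le)
  moreover have "\<bar>N * (1 - cos y)\<bar> \<le> N * 2"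
    using \<open>N \<ge> 0\<close> mult_left_mono[of "1 - cos y" 2 N] by (simp add: abs_mult)
  ultimately show ?thesis
    using abs_triangle_ineq[of "a * (y - sin y) - y * sin y" "N * (1 - cos y)"]
      abs_triangle_ineq4[of "a * (y - sin y)" "y * sin y"]
    by linarith
qed

section \<open>The densities of \<open>p_fun\<close>\<close>

definition p_density :: "nat \<Rightarrow> real \<Rightarrow> real \<Rightarrow> real" where
  "p_density n a x = 2 / a ^ (2 * n + 2) *
     (a * (a * x - sin (a * x)) - a * x * sin (a * x) + (2 * real n + 1) * (1 - cos (a * x)))"

definition p_term :: "nat \<Rightarrow> real \<Rightarrow> real \<Rightarrow> real" where
  "p_term n a t = a powi (1 - 2 * int n) *
     (2 * a / (t\<^sup>2 + a\<^sup>2) + 4 * a * t / (t\<^sup>2 + a\<^sup>2)\<^sup>2 + (2 * real n - 1) / a * (2 * t / (t\<^sup>2 + a\<^sup>2)))"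

lemma p_fun_eq_suminf_p_term: "p_fun n t = (\<Sum>k. p_term n (2 * pi * real (Suc k)) t) / t\<^sup>2"
  unfolding p_fun_def p_term_def Let_def by (simp add: mult_ac)

lemma continuous_on_p_density [continuous_intros]: "continuous_on S (p_density n a)"
  unfolding p_density_def by (intro continuous_intros)

lemma laplace_p_density:
  assumes "a > 0" "t > 0"
  shows "laplace_piece (p_density n a) t sums (p_term n a t / t\<^sup>2)"
proof -
  define N where "N = 2 * real n + 1"
  define A where "A = a ^ (2 * n)"
  define D where "D = t\<^sup>2 + a\<^sup>2"
  have "A > 0" "D > 0"
    unfolding A_def D_def using assms by (simp_all add: add_pos_pos)
  let ?Q = "trig_quasipoly a N (a\<^sup>2) (- a) (- a) (- N) 0"
  have "p_density n a = (\<lambda>x. 2 / a ^ (2 * n + 2) * ?Q x)"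
    by (auto simp: p_density_def trig_quasipoly_def N_def algebra_simps power2_eq_square)
  then have "laplace_piece (p_density n a) t = (\<lambda>j. 2 / a ^ (2 * n + 2) * laplace_piece ?Q t j)"
    by (intro ext) (simp only: laplace_piece_cmult)
  then have "laplace_piece (p_density n a) t sums (2 / a ^ (2 * n + 2) *
      (N / t + a\<^sup>2 / t\<^sup>2 + (a * - a + t * - N) / D + (2 * a * t * - a + (t\<^sup>2 - a\<^sup>2) * 0) / D\<^sup>2))"
    unfolding D_def by (simp only: sums_mult[OF laplace_trig_quasipoly[OF \<open>t > 0\<close>]])
  also have "2 / a ^ (2 * n + 2) *
      (N / t + a\<^sup>2 / t\<^sup>2 + (a * - a + t * - N) / D + (2 * a * t * - a + (t\<^sup>2 - a\<^sup>2) * 0) / D\<^sup>2)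
    = p_term n a t / t\<^sup>2"
  proof -
    have "a powi (2 * int n) = A"
      unfolding A_def by (metis of_nat_mult of_nat_numeral power_int_of_nat)
    then have powi: "a powi (1 - 2 * int n) = a / A"
      using \<open>a > 0\<close> by (simp add: power_int_diff)
    have pow: "a ^ (2 * n + 2) = A * a\<^sup>2"
      unfolding A_def by (simp add: power_add power2_eq_square)
    show ?thesis
      unfolding p_term_def powi pow N_def D_def[symmetric] using \<open>a > 0\<close> \<open>t > 0\<close> \<open>A > 0\<close> \<open>D > 0\<close>
      apply (simp add: field_simps)
      apply (unfold D_def)
      apply algebra
      done
  qed
  finally show ?thesis .
qed

lemma p_density_nonneg:
  assumes "n \<ge> 1" "a \<ge> 2" "x \<ge> 0"
  shows "p_density n a x \<ge> 0"
proof -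
  have "0 \<le> a * (a * x - sin (a * x)) - a * x * sin (a * x) + (2 * real n + 1) * (1 - cos (a * x))"
    using sin_cos_kernel_nonneg[of "a * x" a "2 * real n + 1"] assms by simp
  then show ?thesis
    unfolding p_density_def using assms by simp
qed

lemma p_density_bound:
  assumes "n \<ge> 1" "a \<ge> 1" "x \<ge> 0"
  shows "\<bar>p_density n a x\<bar> \<le> 8 * (real n + 1) / a\<^sup>2 * (1 + x)"
proof -
  define u where "u = a\<^sup>2 * (1 + x)"
  have "a \<le> a\<^sup>2"
    using assms mult_left_mono[of 1 a a] by (simp add: power2_eq_square)
  moreover have "1 \<le> a\<^sup>2"
    using assms by (simp add: one_le_power)
  moreover have "a * x \<le> a\<^sup>2 * x"
    using \<open>a \<le> a\<^sup>2\<close> \<open>x \<ge> 0\<close> by (rule mult_right_mono)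
  moreover have "0 \<le> a\<^sup>2 * x"
    using \<open>x \<ge> 0\<close> by simp
  ultimately have u: "a * (a * x + 1) \<le> u" "a * x \<le> u" "1 \<le> u"
    unfolding u_def by (simp_all add: algebra_simps power2_eq_square)
  have "(2 * real n + 1) * 2 \<le> (2 * real n + 1) * (2 * u)"
    using u(3) by (intro mult_left_mono) auto
  with u sin_cos_kernel_bound[of "a * x" a "2 * real n + 1"] assms
  have kernel: "\<bar>a * (a * x - sin (a * x)) - a * x * sin (a * x) + (2 * real n + 1) * (1 - cos (a * x))\<bar>
      \<le> u + u + (2 * real n + 1) * (2 * u)"
    by simp
  have "\<bar>2 / a ^ (2 * n + 2)\<bar> = 2 / a ^ (2 * n + 2)"
    using assms by simp
  then have "\<bar>p_density n a x\<bar> = 2 / a ^ (2 * n + 2) *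
      \<bar>a * (a * x - sin (a * x)) - a * x * sin (a * x) + (2 * real n + 1) * (1 - cos (a * x))\<bar>"
    unfolding p_density_def abs_mult by simp
  also have "\<dots> \<le> 2 / a ^ (2 * n + 2) * (u + u + (2 * real n + 1) * (2 * u))"
    using kernel assms by (intro mult_left_mono) simp_all
  also have "\<dots> = 8 * (real n + 1) * (1 + x) / a ^ (2 * n)"
    unfolding u_def using assms by (simp add: power_add field_simps power2_eq_square)
  also have "\<dots> \<le> 8 * (real n + 1) * (1 + x) / a\<^sup>2"
    using assms power_increasing[of 1 n "a\<^sup>2"] by (intro divide_left_mono) (auto simp: power_mult)
  finally show ?thesis
    by simp
qed

lemma two_le_two_pi_Suc: "2 \<le> 2 * pi * real (Suc k)"
proof -
  have "2 * pi * 1 \<le> 2 * pi * real (Suc k)"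
    by (intro mult_left_mono) auto
  then show ?thesis
    using pi_gt3 by linarith
qed

lemma p_density_freq_bound:
  assumes "n \<ge> 1" "x \<ge> 0"
  shows "\<bar>p_density n (2 * pi * real (Suc k)) x\<bar> \<le> 8 * (real n + 1) / (2 * pi * real (Suc k))\<^sup>2 * (1 + x)"
  using p_density_bound[OF assms(1) _ assms(2)] two_le_two_pi_Suc[of k] by simp

definition p_moment :: "nat \<Rightarrow> nat \<Rightarrow> real \<Rightarrow> real" where
  "p_moment n m t = (\<Sum>k. laplace (\<lambda>x. x ^ m * p_density n (2 * pi * real (Suc k)) x) t)"

lemma laplace_p_density_dominated:
  assumes "n \<ge> 1" "t0 > 0"
  shows "\<exists>M. summable M \<and>
    (\<forall>k t. t0 \<le> t \<longrightarrow> \<bar>laplace (\<lambda>x. x ^ m * p_density n (2 * pi * real (Suc k)) x) t\<bar> \<le> M k)"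
proof -
  obtain C where C: "\<And>g B t. continuous_on {0..} g \<Longrightarrow> (\<And>x. x \<ge> 0 \<Longrightarrow> \<bar>g x\<bar> \<le> B * (1 + x)) \<Longrightarrow>
      t0 \<le> t \<Longrightarrow> \<bar>laplace (\<lambda>x. x ^ m * g x) t\<bar> \<le> B * C"
    using laplace_pow_mult_bound[OF \<open>t0 > 0\<close>] by blast
  define M where "M k = 8 * (real n + 1) / (2 * pi * real (Suc k))\<^sup>2 * C" for k
  have "summable (\<lambda>k. inverse (real k ^ 2))"
    by (rule inverse_power_summable) simp
  then have "summable (\<lambda>k. 2 * (real n + 1) / pi\<^sup>2 * C * inverse (real (Suc k) ^ 2))"
    by (subst summable_Suc_iff) (rule summable_mult)
  moreover have "M = (\<lambda>k. 2 * (real n + 1) / pi\<^sup>2 * C * inverse (real (Suc k) ^ 2))"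
    unfolding M_def power_mult_distrib by (rule ext) (simp add: field_simps)
  ultimately have "summable M"
    by simp
  moreover have "\<bar>laplace (\<lambda>x. x ^ m * p_density n (2 * pi * real (Suc k)) x) t\<bar> \<le> M k"
    if "t0 \<le> t" for k t
    unfolding M_def
    by (rule C[OF _ p_density_freq_bound[OF \<open>n \<ge> 1\<close>] that]) (intro continuous_intros)
  ultimately show ?thesis
    unfolding M_def by blast
qed

lemma summable_p_moment_terms:
  assumes "n \<ge> 1" "t > 0"
  shows "summable (\<lambda>k. laplace (\<lambda>x. x ^ m * p_density n (2 * pi * real (Suc k)) x) t)"
proof -
  obtain M where "summable M"
    and M: "\<forall>k t'. t \<le> t' \<longrightarrow> \<bar>laplace (\<lambda>x. x ^ m * p_density n (2 * pi * real (Suc k)) x) t'\<bar> \<le> M k"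
    using laplace_p_density_dominated[OF assms] by blast
  show ?thesis
  proof (rule summable_comparison_test[OF _ \<open>summable M\<close>])
    show "\<exists>N. \<forall>k\<ge>N. norm (laplace (\<lambda>x. x ^ m * p_density n (2 * pi * real (Suc k)) x) t) \<le> M k"
      using M by auto
  qed
qed

lemma p_moment_0:
  assumes "n \<ge> 1" "t > 0"
  shows "p_moment n 0 t = p_fun n t"
proof -
  have laplace_eq: "laplace (\<lambda>x. x ^ 0 * p_density n (2 * pi * real (Suc k)) x) t
      = p_term n (2 * pi * real (Suc k)) t / t\<^sup>2" for k
    unfolding laplace_def using laplace_p_density[of "2 * pi * real (Suc k)" t n] \<open>t > 0\<close>
    by (simp add: sums_iff)
  have "summable (\<lambda>k. p_term n (2 * pi * real (Suc k)) t / t\<^sup>2)"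
    using summable_p_moment_terms[OF assms, of 0] unfolding laplace_eq .
  then have "summable (\<lambda>k. p_term n (2 * pi * real (Suc k)) t)"
    using \<open>t > 0\<close> by simp
  then show ?thesis
    unfolding p_moment_def laplace_eq p_fun_eq_suminf_p_term by (rule suminf_divide)
qed

lemma p_moment_has_derivative:
  assumes "n \<ge> 1" "t > 0"
  shows "(p_moment n m has_real_derivative - p_moment n (Suc m) t) (at t)"
proof -
  let ?g = "\<lambda>k x. p_density n (2 * pi * real (Suc k)) x"
  have "((\<lambda>t. \<Sum>k. laplace (\<lambda>x. x ^ m * ?g k x) t) has_real_derivative
      (\<Sum>k. - laplace (\<lambda>x. x ^ Suc m * ?g k x) t)) (at t)"
  proof -
    obtain M where M: "summable M"
      "\<And>k t'. t / 2 \<le> t' \<Longrightarrow> \<bar>laplace (\<lambda>x. x ^ Suc m * ?g k x) t'\<bar> \<le> M k"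
      using laplace_p_density_dominated[OF \<open>n \<ge> 1\<close>, of "t / 2" "Suc m"] \<open>t > 0\<close> by auto
    have "(laplace (\<lambda>x. x ^ m * ?g k x) has_real_derivative - laplace (\<lambda>x. x ^ Suc m * ?g k x) t') (at t')"
      if "t / 2 \<le> t'" for k t'
    proof -
      have "subexponential (\<lambda>x. x ^ m * ?g k x)"
        by (rule subexponential_pow_mult[OF p_density_freq_bound[OF \<open>n \<ge> 1\<close>]])
      then show ?thesis
        using laplace_has_derivative[of "\<lambda>x. x ^ m * ?g k x" t'] that \<open>t > 0\<close>
        by (simp add: continuous_intros mult.assoc)
    qed
    then show ?thesis
      using M summable_p_moment_terms[OF assms, of m] \<open>t > 0\<close>
      by (intro has_real_derivative_suminf[of "t / 2"]) auto
  qed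
  moreover have "(\<Sum>k. - laplace (\<lambda>x. x ^ Suc m * ?g k x) t) = - p_moment n (Suc m) t"
    unfolding p_moment_def by (intro suminf_minus summable_p_moment_terms assms)
  ultimately show ?thesis
    unfolding p_moment_def[abs_def] by simp
qed

lemma p_moment_nonneg:
  assumes "n \<ge> 1" "t > 0"
  shows "p_moment n m t \<ge> 0"
  unfolding p_moment_def
proof (rule suminf_nonneg[OF summable_p_moment_terms[OF assms]])
  fix k
  have "subexponential (\<lambda>x. x ^ m * p_density n (2 * pi * real (Suc k)) x)"
    by (rule subexponential_pow_mult[OF p_density_freq_bound[OF \<open>n \<ge> 1\<close>]])
  then show "laplace (\<lambda>x. x ^ m * p_density n (2 * pi * real (Suc k)) x) t \<ge> 0"
    using \<open>t > 0\<close> p_density_nonneg[OF \<open>n \<ge> 1\<close> two_le_two_pi_Suc]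
    by (intro laplace_nonneg continuous_intros) auto
qed

theorem proposition5p1:
  fixes n :: nat
  assumes "n \<ge> 1"
  shows "completely_monotonic (p_fun n)"
proof (rule completely_monotonicI[where F = "p_moment n"])
  show "p_moment n 0 t = p_fun n t" if "t > 0" for t
    using p_moment_0[OF assms that] .
  show "(p_moment n m has_real_derivative - p_moment n (Suc m) t) (at t)" if "t > 0" for m t
    using p_moment_has_derivative[OF assms that] .
  show "p_moment n m t \<ge> 0" if "t > 0" for m t
    using p_moment_nonneg[OF assms that] .
qed
end
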